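(* Let $\ell$, $n$, $s$ be positive integers with $s\le n$. For a positive integer $\ell'$, let $\mathrm{CAN}(n,\ell';s)$ be the set of $n\times n$ matrices of the block diagonal form $\operatorname{diag}(Q_s, I_{n-s})$, where $Q_s$ is a rational orthogonal matrix of order $s$ and level $\ell'$ each of whose entries is either $0$ or a non-integer rational number, and $I_{n-s}$ is the identity of order $n-s$. Then $$\sum_{\ell'\mid\ell}\big|\mathrm{CAN}(n,\ell';s)\big|\le (2s)^{\ell^2 s}.$$
   Context: A rational orthogonal matrix is a square matrix $Q$ with rational entries and $Q^\top Q=I$. The level of a rational matrix $M$ is the smallest positive integer $\ell$ such that $\ell M$ has integer entries. The sum ranges over all positive divisors $\ell'$ of $\ell$. *)

theory Defs
  imports "Jordan_Normal_Form.Matrix"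
begin

definition integral_mat :: "rat mat \<Rightarrow> bool" where
  "integral_mat M \<longleftrightarrow> (\<forall>i<dim_row M. \<forall>j<dim_col M. M $$ (i,j) \<in> \<int>)"

definition level :: "rat mat \<Rightarrow> nat" where
  "level M = (LEAST l::nat. 0 < l \<and> integral_mat (of_nat l \<cdot>\<^sub>m M))"

definition rat_orthogonal :: "nat \<Rightarrow> rat mat \<Rightarrow> bool" where
  "rat_orthogonal s Q \<longleftrightarrow> Q \<in> carrier_mat s s \<and> transpose_mat Q * Q = 1\<^sub>m s"

definition CAN :: "nat \<Rightarrow> nat \<Rightarrow> nat \<Rightarrow> rat mat set" where
  "CAN n l s = {four_block_mat Q (0\<^sub>m s (n - s)) (0\<^sub>m (n - s) s) (1\<^sub>m (n - s)) | Q.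
      rat_orthogonal s Q \<and> level Q = l \<and>
      (\<forall>i<s. \<forall>j<s. Q $$ (i,j) = 0 \<or> Q $$ (i,j) \<notin> \<int>)}"

end

theory Submission
  imports Defs
begin

(* If l' divides l, every Q counted in CAN(n,l';s) is an orthogonal matrix for which l Q is
   integral, and distinct l' give distinct Q. So the sum is at most the number of orthogonal
   s x s matrices Q with l Q integral. Each column of l Q is an integer vector z with
   z_1^2 + ... + z_s^2 = l^2, and such a vector is determined by the word of length l^2 over
   the 2s letters (i, sign z_i) in which each i occurs z_i^2 times. Hence there are at most
   (2s)^(l^2) choices per column and (2s)^(l^2 s) matrices. *)

lemma integral_mat_common_denominator:
  fixes Q :: "rat mat"
  shows "\<exists>k::nat. 0 < k \<and> integral_mat (of_nat k \<cdot>\<^sub>m Q)"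
proof -
  define den where "den = (\<lambda>p. nat (snd (quotient_of (Q $$ p))))"
  define I where "I = {..<dim_row Q} \<times> {..<dim_col Q}"
  define D where "D = prod den I"
  have den_pos: "0 < den p" for p
    unfolding den_def by (metis prod.collapse quotient_of_denom_pos zero_less_nat_eq)
  have "integral_mat (of_nat D \<cdot>\<^sub>m Q)"
    unfolding integral_mat_def
  proof (intro allI impI)
    fix i j assume ij: "i < dim_row (of_nat D \<cdot>\<^sub>m Q)" "j < dim_col (of_nat D \<cdot>\<^sub>m Q)"
    then have "(i, j) \<in> I" unfolding I_def by simp
    then have D_split: "D = den (i, j) * prod den (I - {(i, j)})"
      unfolding D_def I_def by (simp add: prod.remove)
    obtain a b where ab: "quotient_of (Q $$ (i, j)) = (a, b)" by fastforce
    then have "0 < b" "Q $$ (i, j) = of_int a / of_int b" "den (i, j) = nat b"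
      by (auto simp: den_def quotient_of_denom_pos quotient_of_div)
    then have "of_nat D * Q $$ (i, j) = of_nat (prod den (I - {(i, j)})) * of_int a"
      unfolding D_split by (simp del: of_nat_prod)
    then show "(of_nat D \<cdot>\<^sub>m Q) $$ (i, j) \<in> \<int>" using ij by (simp del: of_nat_prod)
  qed
  moreover have "0 < D" unfolding D_def using den_pos by (simp add: prod_pos)
  ultimately show ?thesis by blast
qed

lemma integral_mat_level: "integral_mat (of_nat (level Q) \<cdot>\<^sub>m Q)"
  using LeastI_ex[OF integral_mat_common_denominator[of Q]] unfolding level_def by blast

lemma integral_mat_smult_dvd:
  assumes "integral_mat (of_nat a \<cdot>\<^sub>m Q)" and "a dvd b"
  shows "integral_mat (of_nat b \<cdot>\<^sub>m Q)"
  unfolding integral_mat_def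
proof (intro allI impI)
  fix i j assume ij: "i < dim_row (of_nat b \<cdot>\<^sub>m Q)" "j < dim_col (of_nat b \<cdot>\<^sub>m Q)"
  obtain c where c: "b = a * c" using assms(2) by blast
  have "of_nat a * Q $$ (i, j) \<in> \<int>" using assms(1) ij unfolding integral_mat_def by auto
  then have "of_nat c * (of_nat a * Q $$ (i, j)) \<in> \<int>" by simp
  then show "(of_nat b \<cdot>\<^sub>m Q) $$ (i, j) \<in> \<int>" using ij c by (simp add: ac_simps)
qed

definition int_sphere :: "nat \<Rightarrow> nat \<Rightarrow> (nat \<Rightarrow> int) set" where
  "int_sphere s m = {z \<in> {..<s} \<rightarrow>\<^sub>E UNIV. (\<Sum>i<s. z i ^ 2) = int m}"

definition sphere_code :: "nat \<Rightarrow> (nat \<Rightarrow> int) \<Rightarrow> (nat \<times> bool) list" where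
  "sphere_code s z = concat (map (\<lambda>i. replicate (nat (z i ^ 2)) (i, 0 \<le> z i)) [0..<s])"

lemma length_sphere_code: "length (sphere_code s z) = nat (\<Sum>i<s. z i ^ 2)"
  unfolding sphere_code_def by (induction s) (auto simp: nat_add_distrib sum_nonneg)

lemma set_sphere_code: "set (sphere_code s z) = {(i, 0 \<le> z i) | i. i < s \<and> z i \<noteq> 0}"
  unfolding sphere_code_def by auto

lemma count_sphere_code:
  "i < s \<Longrightarrow> length (filter (\<lambda>p. fst p = i) (sphere_code s z)) = nat (z i ^ 2)"
proof (induction s)
  case (Suc s)
  then show ?case
    by (cases "i = s") (auto simp: sphere_code_def filter_replicate not_less_less_Suc_eq)
qed simp

lemma sphere_code_eqD:
  assumes "sphere_code s z = sphere_code s w" and "i < s"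
  shows "z i = w i"
proof -
  have "nat (z i ^ 2) = nat (w i ^ 2)"
    using assms count_sphere_code[of i s] by metis
  then have "z i = w i \<or> z i = - w i"
    by (simp add: eq_nat_nat_iff power2_eq_iff)
  moreover have "0 \<le> z i \<longleftrightarrow> 0 \<le> w i" if "z i \<noteq> 0"
  proof -
    have "(i, 0 \<le> z i) \<in> set (sphere_code s z)"
      unfolding set_sphere_code using that assms(2) by blast
    then have "(i, 0 \<le> z i) \<in> set (sphere_code s w)" by (simp only: assms(1))
    then show ?thesis unfolding set_sphere_code by auto
  qed
  ultimately show ?thesis by linarith
qed

lemma inj_on_sphere_code: "inj_on (sphere_code s) ({..<s} \<rightarrow>\<^sub>E UNIV)"
  by (intro inj_onI PiE_ext) (auto intro: sphere_code_eqD)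

lemma sphere_code_int_sphere:
  "sphere_code s ` int_sphere s m \<subseteq> {xs. set xs \<subseteq> {..<s} \<times> UNIV \<and> length xs = m}"
proof
  fix xs assume "xs \<in> sphere_code s ` int_sphere s m"
  then obtain z where "(\<Sum>i<s. z i ^ 2) = int m" and xs: "xs = sphere_code s z"
    unfolding int_sphere_def by blast
  then show "xs \<in> {xs. set xs \<subseteq> {..<s} \<times> UNIV \<and> length xs = m}"
    using length_sphere_code[of s z] set_sphere_code[of s z] unfolding xs by auto
qed

lemma finite_card_int_sphere: "finite (int_sphere s m) \<and> card (int_sphere s m) \<le> (2 * s) ^ m"
proof -
  let ?W = "{xs. set xs \<subseteq> {..<s} \<times> (UNIV :: bool set) \<and> length xs = m}"
  have inj: "inj_on (sphere_code s) (int_sphere s m)"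
    using inj_on_sphere_code by (rule inj_on_subset) (auto simp: int_sphere_def)
  have "finite ?W" by (intro finite_lists_length_eq) auto
  moreover have "card ?W = (2 * s) ^ m"
    by (simp add: card_lists_length_eq card_cartesian_product)
  ultimately show ?thesis
    using finite_imageD[OF finite_subset[OF sphere_code_int_sphere] inj]
      card_inj_on_le[OF inj sphere_code_int_sphere] by auto
qed

definition orth_with_denom :: "nat \<Rightarrow> nat \<Rightarrow> rat mat set" where
  "orth_with_denom s l = {Q. rat_orthogonal s Q \<and> integral_mat (of_nat l \<cdot>\<^sub>m Q)}"

lemma rat_orthogonal_column_norm:
  assumes "rat_orthogonal s Q" and "j < s"
  shows "(\<Sum>i<s. Q $$ (i, j) ^ 2) = 1"
proof -
  have Q: "Q \<in> carrier_mat s s" "transpose_mat Q * Q = 1\<^sub>m s"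
    using assms(1) unfolding rat_orthogonal_def by auto
  have "(transpose_mat Q * Q) $$ (j, j) = 1" using Q \<open>j < s\<close> by simp
  moreover have "(transpose_mat Q * Q) $$ (j, j) = (\<Sum>i<s. Q $$ (i, j) ^ 2)"
    using Q(1) \<open>j < s\<close> by (simp add: scalar_prod_def power2_eq_square atLeast0LessThan)
  ultimately show ?thesis by simp
qed

definition scaled_column :: "nat \<Rightarrow> nat \<Rightarrow> rat mat \<Rightarrow> nat \<Rightarrow> nat \<Rightarrow> int" where
  "scaled_column s l Q j = (\<lambda>i\<in>{..<s}. \<lfloor>of_nat l * Q $$ (i, j)\<rfloor>)"

lemma of_int_scaled_column:
  assumes "Q \<in> orth_with_denom s l" and "i < s" and "j < s"
  shows "of_int (scaled_column s l Q j i) = of_nat l * Q $$ (i, j)"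
proof -
  have "(of_nat l \<cdot>\<^sub>m Q) $$ (i, j) \<in> \<int>"
    using assms unfolding orth_with_denom_def rat_orthogonal_def integral_mat_def by auto
  then show ?thesis
    using assms unfolding orth_with_denom_def rat_orthogonal_def scaled_column_def
    by (auto simp: of_int_floor_cancel elim: Ints_cases)
qed

lemma scaled_column_int_sphere:
  assumes Q: "Q \<in> orth_with_denom s l" and "j < s"
  shows "scaled_column s l Q j \<in> int_sphere s (l ^ 2)"
proof -
  let ?z = "scaled_column s l Q j"
  have "(of_int (\<Sum>i<s. ?z i ^ 2) :: rat) = (\<Sum>i<s. of_int (?z i) ^ 2)"
    by simp
  also have "\<dots> = (\<Sum>i<s. (of_nat l * Q $$ (i, j)) ^ 2)"
    using of_int_scaled_column[OF Q _ \<open>j < s\<close>] by (intro sum.cong) auto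
  also have "\<dots> = of_nat l ^ 2 * (\<Sum>i<s. Q $$ (i, j) ^ 2)"
    by (simp add: power_mult_distrib sum_distrib_left)
  also have "\<dots> = of_int (int l ^ 2)"
    using Q \<open>j < s\<close> rat_orthogonal_column_norm unfolding orth_with_denom_def by simp
  finally have "(\<Sum>i<s. ?z i ^ 2) = int (l ^ 2)"
    unfolding of_int_eq_iff by simp
  moreover have "?z \<in> {..<s} \<rightarrow>\<^sub>E UNIV" unfolding scaled_column_def by simp
  ultimately show ?thesis unfolding int_sphere_def by blast
qed

lemma finite_card_orth_with_denom:
  assumes "0 < l"
  shows "finite (orth_with_denom s l) \<and> card (orth_with_denom s l) \<le> (2 * s) ^ (l ^ 2 * s)"
proof -
  define cols where "cols = (\<lambda>Q. \<lambda>j\<in>{..<s}. scaled_column s l Q j)"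
  define T where "T = {..<s} \<rightarrow>\<^sub>E int_sphere s (l ^ 2)"
  have into: "cols ` orth_with_denom s l \<subseteq> T"
    unfolding cols_def T_def using scaled_column_int_sphere by auto
  have inj: "inj_on cols (orth_with_denom s l)"
  proof (rule inj_onI, rule eq_matI)
    fix Q1 Q2 i j
    assume Q: "Q1 \<in> orth_with_denom s l" "Q2 \<in> orth_with_denom s l" "cols Q1 = cols Q2"
      and "i < dim_row Q2" "j < dim_col Q2"
    then have ij: "i < s" "j < s" unfolding orth_with_denom_def rat_orthogonal_def by auto
    then have "scaled_column s l Q1 j i = scaled_column s l Q2 j i"
      using Q(3) unfolding cols_def by (metis lessThan_iff restrict_apply')
    then have "of_nat l * Q1 $$ (i, j) = of_nat l * Q2 $$ (i, j)"
      using of_int_scaled_column[OF Q(1) ij] of_int_scaled_column[OF Q(2) ij] by metis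
    then show "Q1 $$ (i, j) = Q2 $$ (i, j)" using assms by simp
  qed (auto simp: orth_with_denom_def rat_orthogonal_def)
  have "finite T \<and> card T = card (int_sphere s (l ^ 2)) ^ s"
    unfolding T_def using finite_card_int_sphere by (simp add: finite_PiE card_PiE)
  moreover have "card (int_sphere s (l ^ 2)) ^ s \<le> (2 * s) ^ (l ^ 2 * s)"
    unfolding power_mult using finite_card_int_sphere by (simp add: power_mono)
  ultimately show ?thesis
    using finite_imageD[OF finite_subset[OF into] inj] card_inj_on_le[OF inj into] by auto
qed

lemma card_CAN_le:
  assumes "0 < l" and "l' dvd l"
  shows "card (CAN n l' s) \<le> card {Q \<in> orth_with_denom s l. level Q = l'}"
proof -
  let ?block = "\<lambda>Q. four_block_mat Q (0\<^sub>m s (n - s)) (0\<^sub>m (n - s) s) (1\<^sub>m (n - s))"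
  let ?Qs = "{Q \<in> orth_with_denom s l. level Q = l'}"
  have "CAN n l' s \<subseteq> ?block ` ?Qs"
    using integral_mat_smult_dvd[OF integral_mat_level, of _ l] assms(2)
    unfolding CAN_def orth_with_denom_def by blast
  moreover have "finite ?Qs" using finite_card_orth_with_denom[OF assms(1)] by simp
  ultimately show ?thesis by (meson card_image_le card_mono finite_imageI order_trans)
qed

theorem mainTheorem4:
  fixes l n s :: nat
  assumes "0 < l" and "0 < n" and "0 < s" and "s \<le> n"
  shows "(\<Sum>l'\<in>{l'. 0 < l' \<and> l' dvd l}. card (CAN n l' s)) \<le> (2 * s) ^ (l\<^sup>2 * s)"
proof -
  define D where "D = {l'. 0 < l' \<and> l' dvd l}"
  define S where "S = orth_with_denom s l"
  have fin_S: "finite S" and card_S: "card S \<le> (2 * s) ^ (l\<^sup>2 * s)"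
    using finite_card_orth_with_denom[OF \<open>0 < l\<close>] unfolding S_def by auto
  have "D \<subseteq> {..l}" unfolding D_def using \<open>0 < l\<close> by (auto dest: dvd_imp_le)
  then have "finite D" by (rule finite_subset) simp
  have "(\<Sum>l'\<in>D. card (CAN n l' s)) \<le> (\<Sum>l'\<in>D. card {Q \<in> S. level Q = l'})"
    unfolding D_def S_def using \<open>0 < l\<close> by (intro sum_mono card_CAN_le) auto
  also have "\<dots> = card (\<Union>l'\<in>D. {Q \<in> S. level Q = l'})"
    using \<open>finite D\<close> fin_S by (intro card_UN_disjoint[symmetric]) auto
  also have "\<dots> \<le> card S" using fin_S by (intro card_mono) auto
  finally show ?thesis using card_S unfolding D_def by simp
qed

end
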